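(* Let $D$ be an E-simple integral domain with maximal subfield $K$. Suppose $f,g\in D\setminus K$ are not algebraically independent over $K$. Then $\mathfrak p_f=\mathfrak p_g$. In particular, if $g\in K[f]\setminus K$, then $\mathfrak p_f=\mathfrak p_g$.
   Context: For an integral domain $D$ with fraction field $F$, the reciprocal complement $R(D)$ is the subring of $F$ generated by all $1/d$, $d\in D\setminus\{0\}$. An element $d\in D$ is Egyptian if $d\in R(D)$. $D$ is E-simple if every Egyptian element of $D$ is a unit; then the Egyptian elements together with $0$ form a subfield $K$ of $D$, the maximal subfield. For nonzero $f\in D$, $\mathfrak p_f$ denotes the unique prime ideal of $R(D)$ maximal with respect to not containing $1/f$. *)

theory Defs
  imports "HOL-Computational_Algebra.Fraction_Field"
begin

definition emb :: "'a::idom \<Rightarrow> 'a fract" where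
  "emb d = Fract d 1"

inductive_set recip_compl :: "'a::idom fract set" where
  unit_frac: "d \<noteq> 0 \<Longrightarrow> inverse (emb d) \<in> recip_compl"
| zero: "0 \<in> recip_compl"
| one: "1 \<in> recip_compl"
| add: "x \<in> recip_compl \<Longrightarrow> y \<in> recip_compl \<Longrightarrow> x + y \<in> recip_compl"
| neg: "x \<in> recip_compl \<Longrightarrow> - x \<in> recip_compl"
| mult: "x \<in> recip_compl \<Longrightarrow> y \<in> recip_compl \<Longrightarrow> x * y \<in> recip_compl"

definition egyptian :: "'a::idom \<Rightarrow> bool" where
  "egyptian d \<longleftrightarrow> d \<noteq> 0 \<and> emb d \<in> recip_compl"

definition E_simple :: "'a::idom itself \<Rightarrow> bool" where
  "E_simple _ \<longleftrightarrow> (\<forall>d::'a. egyptian d \<longrightarrow> d dvd 1)"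

definition max_subfield :: "'a::idom set" where
  "max_subfield = {d. egyptian d} \<union> {0}"

definition prime_ideal_R :: "'a::idom fract set \<Rightarrow> bool" where
  "prime_ideal_R P \<longleftrightarrow>
     P \<subseteq> recip_compl \<and> 0 \<in> P \<and>
     (\<forall>x\<in>P. \<forall>y\<in>P. x + y \<in> P) \<and>
     (\<forall>r\<in>recip_compl. \<forall>x\<in>P. r * x \<in> P) \<and>
     P \<noteq> recip_compl \<and>
     (\<forall>x\<in>recip_compl. \<forall>y\<in>recip_compl. x * y \<in> P \<longrightarrow> x \<in> P \<or> y \<in> P)"

definition p_ideal :: "'a::idom \<Rightarrow> 'a fract set" where
  "p_ideal f = (THE P. prime_ideal_R P \<and> inverse (emb f) \<notin> P \<and>
      (\<forall>Q. prime_ideal_R Q \<and> inverse (emb f) \<notin> Q \<and> P \<subseteq> Q \<longrightarrow> Q = P))"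

definition alg_dep_over :: "'a::idom set \<Rightarrow> 'a \<Rightarrow> 'a \<Rightarrow> bool" where
  "alg_dep_over K f g \<longleftrightarrow>
     (\<exists>(N::nat) (c::nat \<Rightarrow> nat \<Rightarrow> 'a).
        (\<forall>i j. c i j \<in> K) \<and> (\<exists>i\<le>N. \<exists>j\<le>N. c i j \<noteq> 0) \<and>
        (\<Sum>i\<le>N. \<Sum>j\<le>N. c i j * f ^ i * g ^ j) = 0)"

definition in_poly_ring :: "'a::idom set \<Rightarrow> 'a \<Rightarrow> 'a \<Rightarrow> bool" where
  "in_poly_ring K f g \<longleftrightarrow>
     (\<exists>(n::nat) (c::nat \<Rightarrow> 'a). (\<forall>i. c i \<in> K) \<and> g = (\<Sum>i\<le>n. c i * f ^ i))"

end

theory Submission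
  imports Defs
begin

(* Since g is not in K and every nonzero element of K is a unit, g is transcendental over K, so a
   nonzero relation P(f,g) = 0 can be written as sum_{i<=n} A_i f^i = 0 with A_n <> 0 and each A_i a
   K-polynomial in g of degree at most N. Dividing by g^N f^n turns it into a relation
   sum_{i<=n} (A_i/g^N) (1/f)^(n-i) = 0 whose coefficients A_i/g^N lie in R(D). Hence if 1/f lies in
   a prime P of R(D), so does A_n/g^N; as 1/A_n is in R(D), (1/g)^N and therefore 1/g lie in P.
   By symmetry 1/f and 1/g lie in the same primes of R(D), which forces p_f = p_g. *)

lemma emb_0 [simp]: "emb 0 = 0"
  by (simp add: emb_def Zero_fract_def)

lemma emb_1 [simp]: "emb 1 = 1"
  by (simp add: emb_def One_fract_def)

lemma emb_add [simp]: "emb (a + b) = emb a + emb b"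
  by (simp add: emb_def)

lemma emb_mult [simp]: "emb (a * b) = emb a * emb b"
  by (simp add: emb_def)

lemma emb_eq_0_iff [simp]: "emb a = 0 \<longleftrightarrow> a = 0"
  by (simp add: emb_def Zero_fract_def eq_fract)

lemma emb_power [simp]: "emb (a ^ n) = emb a ^ n"
  by (induction n) simp_all

lemma emb_sum [simp]: "emb (sum h A) = (\<Sum>x\<in>A. emb (h x))"
  by (induction A rule: infinite_finite_induct) simp_all

lemma inverse_power_mult_power:
  fixes x :: "'a::field"
  assumes "x \<noteq> 0" "j \<le> n"
  shows "inverse x ^ n * x ^ j = inverse x ^ (n - j)"
proof -
  have "inverse x ^ n = inverse x ^ (n - j) * inverse x ^ j"
    using assms(2) by (simp flip: power_add)
  with assms(1) show ?thesis
    by (simp add: mult.assoc flip: power_mult_distrib)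
qed

lemma recip_compl_sum: "(\<And>x. x \<in> A \<Longrightarrow> h x \<in> recip_compl) \<Longrightarrow> sum h A \<in> recip_compl"
  by (induction A rule: infinite_finite_induct) (simp_all add: recip_compl.zero recip_compl.add)

lemma recip_compl_power: "x \<in> recip_compl \<Longrightarrow> x ^ n \<in> recip_compl"
  by (induction n) (simp_all add: recip_compl.one recip_compl.mult)

lemma unit_in_max_subfield:
  assumes "(u::'a::idom) dvd 1"
  shows "u \<in> max_subfield"
proof -
  obtain v where v: "1 = u * v"
    using assms by (auto elim: dvdE)
  then have "v \<noteq> 0" "u \<noteq> 0"
    by auto
  have "emb v * emb u = 1"
    by (metis emb_1 emb_mult mult.commute v)
  then have "emb u = inverse (emb v)"
    by (simp add: inverse_unique)
  with \<open>v \<noteq> 0\<close> have "emb u \<in> recip_compl"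
    by (simp add: recip_compl.unit_frac)
  with \<open>u \<noteq> 0\<close> show ?thesis
    by (simp add: max_subfield_def egyptian_def)
qed

lemma max_subfield_unit:
  assumes "E_simple TYPE('a)" "(c::'a::idom) \<in> max_subfield" "c \<noteq> 0"
  shows "c dvd 1"
  using assms by (auto simp: max_subfield_def E_simple_def)

lemma emb_max_subfield_in_recip_compl: "(c::'a::idom) \<in> max_subfield \<Longrightarrow> emb c \<in> recip_compl"
  by (auto simp: max_subfield_def egyptian_def recip_compl.zero)

lemma unit_coeffs_sum_powers_eq_0:
  fixes g :: "'a::idom"
  assumes "g \<noteq> 0" "\<not> g dvd 1" "\<And>j. c j \<noteq> 0 \<Longrightarrow> c j dvd 1"
    and "(\<Sum>j\<le>N. c j * g ^ j) = 0"
  shows "j \<le> N \<Longrightarrow> c j = 0"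
  using assms(3,4)
proof (induction N arbitrary: c j)
  case 0
  then show ?case by simp
next
  case (Suc N)
  have "(\<Sum>j\<le>Suc N. c j * g ^ j) = c 0 + g * (\<Sum>j\<le>N. c (Suc j) * g ^ j)"
    by (subst sum.atMost_Suc_shift)
      (simp add: sum_distrib_left mult.left_commute del: sum.atMost_Suc)
  with Suc.prems have rel: "c 0 = - g * (\<Sum>j\<le>N. c (Suc j) * g ^ j)"
    by (simp add: eq_neg_iff_add_eq_0)
  have "c 0 = 0"
  proof (rule ccontr)
    assume "c 0 \<noteq> 0"
    have "g dvd c 0"
      using rel by (simp add: dvd_def) (metis mult_minus_right)
    moreover have "c 0 dvd 1"
      using Suc.prems(2) \<open>c 0 \<noteq> 0\<close> by blast
    ultimately have "g dvd 1"
      by (rule dvd_trans)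
    with assms(2) show False ..
  qed
  with rel \<open>g \<noteq> 0\<close> have "(\<Sum>j\<le>N. c (Suc j) * g ^ j) = 0"
    by simp
  with Suc.IH[where c = "\<lambda>j. c (Suc j)"] Suc.prems(2) have "\<forall>j\<le>N. c (Suc j) = 0"
    by blast
  with \<open>c 0 = 0\<close> \<open>j \<le> Suc N\<close> show ?case
    by (cases j) auto
qed

lemma max_subfield_sum_powers_eq_0:
  fixes g :: "'a::idom"
  assumes "E_simple TYPE('a)" "g \<notin> max_subfield" "\<forall>j. c j \<in> max_subfield"
    and "(\<Sum>j\<le>N. c j * g ^ j) = 0" "j \<le> N"
  shows "c j = 0"
proof (rule unit_coeffs_sum_powers_eq_0)
  show "g \<noteq> 0" "\<not> g dvd 1"
    using assms(2) unit_in_max_subfield by (auto simp: max_subfield_def)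
qed (use assms max_subfield_unit in auto)

lemma emb_sum_powers_div_power_in_recip_compl:
  fixes g :: "'a::idom"
  assumes "g \<noteq> 0" "\<forall>j. c j \<in> max_subfield"
  shows "inverse (emb g) ^ N * emb (\<Sum>j\<le>N. c j * g ^ j) \<in> recip_compl"
proof -
  let ?s = "inverse (emb g)"
  have "?s ^ N * emb g ^ j = ?s ^ (N - j)" if "j \<le> N" for j
    using that assms(1) by (simp add: inverse_power_mult_power)
  then have "?s ^ N * emb (\<Sum>j\<le>N. c j * g ^ j) = (\<Sum>j\<le>N. emb (c j) * ?s ^ (N - j))"
    by (simp add: sum_distrib_left ac_simps)
  also have "\<dots> \<in> recip_compl"
    using assms(1,2) by (intro recip_compl_sum recip_compl.mult recip_compl_power
        recip_compl.unit_frac emb_max_subfield_in_recip_compl) auto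
  finally show ?thesis .
qed

context
  fixes P :: "'a::idom fract set"
  assumes P: "prime_ideal_R P"
begin

lemma prime_ideal_R_add: "x \<in> P \<Longrightarrow> y \<in> P \<Longrightarrow> x + y \<in> P"
  using P by (auto simp: prime_ideal_R_def)

lemma prime_ideal_R_mult: "r \<in> recip_compl \<Longrightarrow> x \<in> P \<Longrightarrow> r * x \<in> P"
  using P by (auto simp: prime_ideal_R_def)

lemma prime_ideal_R_uminus: "x \<in> P \<Longrightarrow> - x \<in> P"
  using prime_ideal_R_mult[OF recip_compl.neg[OF recip_compl.one]] by simp

lemma prime_ideal_R_sum: "(\<And>x. x \<in> A \<Longrightarrow> h x \<in> P) \<Longrightarrow> sum h A \<in> P"
  using P by (induction A rule: infinite_finite_induct)
    (auto simp: prime_ideal_R_def prime_ideal_R_add)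

lemma prime_ideal_R_one_notin: "1 \<notin> P"
proof
  assume "1 \<in> P"
  then have "recip_compl \<subseteq> P"
    using prime_ideal_R_mult[of _ 1] by auto
  with P show False
    by (auto simp: prime_ideal_R_def)
qed

lemma prime_ideal_R_power_imp: "x \<in> recip_compl \<Longrightarrow> x ^ n \<in> P \<Longrightarrow> x \<in> P"
proof (induction n)
  case 0
  then show ?case
    using prime_ideal_R_one_notin by simp
next
  case (Suc n)
  then have "x * x ^ n \<in> P" "x ^ n \<in> recip_compl"
    by (simp_all add: recip_compl_power)
  with \<open>x \<in> recip_compl\<close> have "x \<in> P \<or> x ^ n \<in> P"
    using P unfolding prime_ideal_R_def by blast
  with Suc show ?case
    by blast
qed

text \<open>Multiplying the relation by u (1/f)^n exhibits u A_n as a multiple of 1/f in R(D);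
  then divide by A_n, whose inverse lies in R(D).\<close>

lemma in_prime_ideal_R_if_relation:
  fixes f :: 'a
  assumes "f \<noteq> 0" "inverse (emb f) \<in> P" "(\<Sum>i\<le>n. a i * f ^ i) = 0" "a n \<noteq> 0"
    and "\<And>i. i \<le> n \<Longrightarrow> u * emb (a i) \<in> recip_compl"
  shows "u \<in> P"
proof -
  let ?t = "inverse (emb f)"
  have "?t ^ n * emb f ^ i = ?t ^ (n - i)" if "i \<le> n" for i
    using that assms(1) by (simp add: inverse_power_mult_power)
  then have "(\<Sum>i\<le>n. u * emb (a i) * ?t ^ (n - i)) = u * ?t ^ n * emb (\<Sum>i\<le>n. a i * f ^ i)"
    by (simp add: sum_distrib_left ac_simps)
  with assms(3) have "u * emb (a n) = - (\<Sum>i<n. u * emb (a i) * ?t ^ (n - i))"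
    by (simp add: lessThan_Suc_atMost[symmetric] eq_neg_iff_add_eq_0 add.commute)
  also have "\<dots> \<in> P"
  proof (intro prime_ideal_R_uminus prime_ideal_R_sum)
    fix i
    assume "i \<in> {..<n}"
    then have "?t ^ (n - i) = ?t ^ (n - Suc i) * ?t"
      by (simp add: Suc_diff_Suc flip: power_Suc2)
    then have "u * emb (a i) * ?t ^ (n - i) = (u * emb (a i) * ?t ^ (n - Suc i)) * ?t"
      by (simp add: mult.assoc)
    also have "\<dots> \<in> P"
      using \<open>i \<in> {..<n}\<close> assms(1,2,5) recip_compl_power[OF recip_compl.unit_frac]
      by (intro prime_ideal_R_mult recip_compl.mult[of "u * emb (a i)"]) auto
    finally show "u * emb (a i) * ?t ^ (n - i) \<in> P" .
  qed
  finally have "inverse (emb (a n)) * (u * emb (a n)) \<in> P"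
    by (rule prime_ideal_R_mult[OF recip_compl.unit_frac[OF assms(4)]])
  moreover have "inverse (emb (a n)) * (u * emb (a n)) = u"
    using assms(4) by (simp add: field_simps)
  ultimately show ?thesis
    by simp
qed

end

lemma alg_dep_over_max_subfield_relation:
  fixes f g :: "'a::idom"
  assumes "E_simple TYPE('a)" "g \<notin> max_subfield" "alg_dep_over max_subfield f g"
  obtains N n c where "\<forall>i j. c i j \<in> max_subfield" "(\<Sum>j\<le>N. c n j * g ^ j) \<noteq> 0"
    "(\<Sum>i\<le>n. (\<Sum>j\<le>N. c i j * g ^ j) * f ^ i) = 0"
proof -
  obtain N c i j where c: "\<forall>i j. c i j \<in> max_subfield" and "i \<le> N" "j \<le> N" "c i j \<noteq> 0"
    and rel: "(\<Sum>i\<le>N. \<Sum>j\<le>N. c i j * f ^ i * g ^ j) = 0"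
    using assms(3) unfolding alg_dep_over_def by blast
  define A where "A i = (\<Sum>j\<le>N. c i j * g ^ j)" for i
  define I where "I = {i. i \<le> N \<and> A i \<noteq> 0}"
  have "A i \<noteq> 0"
    using max_subfield_sum_powers_eq_0[OF assms(1,2), of "c i" N j] c \<open>j \<le> N\<close> \<open>c i j \<noteq> 0\<close>
    by (auto simp: A_def)
  with \<open>i \<le> N\<close> have "I \<noteq> {}"
    by (auto simp: I_def)
  moreover have "finite I"
    by (simp add: I_def)
  ultimately have "Max I \<in> I" and above: "i \<in> I \<Longrightarrow> i \<le> Max I" for i
    by simp_all
  then have "Max I \<le> N" "A (Max I) \<noteq> 0"
    by (simp_all add: I_def)
  have "(\<Sum>i\<le>Max I. A i * f ^ i) = (\<Sum>i\<le>N. A i * f ^ i)"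
    using \<open>Max I \<le> N\<close> above
    by (intro sum.mono_neutral_left) (auto simp: I_def not_le)
  also have "\<dots> = 0"
    using rel by (simp add: A_def sum_distrib_left sum_distrib_right ac_simps)
  finally show ?thesis
    using that[OF c] \<open>A (Max I) \<noteq> 0\<close> by (simp add: A_def)
qed

lemma inverse_emb_in_prime_ideal_R_if_alg_dep:
  fixes f g :: "'a::idom"
  assumes "E_simple TYPE('a)" "f \<notin> max_subfield" "g \<notin> max_subfield"
    and "alg_dep_over max_subfield f g" "prime_ideal_R P" "inverse (emb f) \<in> P"
  shows "inverse (emb g) \<in> P"
proof -
  obtain N n c where c: "\<forall>i j. c i j \<in> max_subfield" and lead: "(\<Sum>j\<le>N. c n j * g ^ j) \<noteq> 0"
    and rel: "(\<Sum>i\<le>n. (\<Sum>j\<le>N. c i j * g ^ j) * f ^ i) = 0"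
    using alg_dep_over_max_subfield_relation[OF assms(1,3,4)] .
  have "f \<noteq> 0" "g \<noteq> 0"
    using assms(2,3) by (auto simp: max_subfield_def)
  have "inverse (emb g) ^ N \<in> P"
  proof (rule in_prime_ideal_R_if_relation[OF assms(5) \<open>f \<noteq> 0\<close> assms(6) rel lead])
    show "inverse (emb g) ^ N * emb (\<Sum>j\<le>N. c i j * g ^ j) \<in> recip_compl" for i
      using \<open>g \<noteq> 0\<close> c by (intro emb_sum_powers_div_power_in_recip_compl) auto
  qed
  then show ?thesis
    by (rule prime_ideal_R_power_imp[OF assms(5) recip_compl.unit_frac[OF \<open>g \<noteq> 0\<close>]])
qed

lemma p_ideal_eqI:
  assumes "\<And>P. prime_ideal_R P \<Longrightarrow> inverse (emb f) \<in> P \<longleftrightarrow> inverse (emb g) \<in> P"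
  shows "p_ideal f = p_ideal g"
  unfolding p_ideal_def using assms by (metis (lifting))

lemma alg_dep_over_sym:
  assumes "alg_dep_over K f g"
  shows "alg_dep_over K g f"
proof -
  obtain N c where "\<forall>i j. c i j \<in> K" "\<exists>i\<le>N. \<exists>j\<le>N. c i j \<noteq> 0"
    and rel: "(\<Sum>i\<le>N. \<Sum>j\<le>N. c i j * f ^ i * g ^ j) = 0"
    using assms unfolding alg_dep_over_def by blast
  moreover have "(\<Sum>i\<le>N. \<Sum>j\<le>N. c j i * g ^ i * f ^ j) = 0"
    using rel by (subst sum.swap) (simp add: ac_simps)
  ultimately show ?thesis
    unfolding alg_dep_over_def by (intro exI[of _ N] exI[of _ "\<lambda>i j. c j i"]) blast
qed

lemma in_poly_ring_imp_alg_dep_over: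
  assumes "in_poly_ring K f g" "0 \<in> K" "-1 \<in> K"
  shows "alg_dep_over K f g"
proof -
  obtain n c where "\<forall>i. c i \<in> K" and g: "g = (\<Sum>i\<le>n. c i * f ^ i)"
    using assms(1) unfolding in_poly_ring_def by blast
  \<comment> \<open>the coefficients of the polynomial sum_i c_i X^i - Y\<close>
  define d where "d (i::nat) (j::nat) = (if j = 0 \<and> i \<le> n then c i else if j = 1 \<and> i = 0 then -1 else 0)"
    for i j
  have "d i j * f ^ i * g ^ j = (if j = 0 then (if i \<le> n then c i * f ^ i else 0) else 0)
      + (if j = 1 then (if i = 0 then - g else 0) else 0)" for i j
    by (simp add: d_def)
  then have "(\<Sum>i\<le>Suc n. \<Sum>j\<le>Suc n. d i j * f ^ i * g ^ j) = (\<Sum>i\<le>n. c i * f ^ i) - g"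
    by (simp add: sum.distrib Suc_le_eq)
  then show ?thesis
    unfolding alg_dep_over_def using \<open>\<forall>i. c i \<in> K\<close> assms(2,3) g
    by (intro exI[of _ "Suc n"] exI[of _ d]) (auto simp: d_def)
qed

theorem mainTheorem7:
  fixes f g :: "'a::idom"
  assumes "E_simple TYPE('a)"
    and "f \<notin> max_subfield"
  shows "(g \<notin> max_subfield \<and> alg_dep_over max_subfield f g \<longrightarrow> p_ideal f = p_ideal g)
     \<and> (in_poly_ring max_subfield f g \<and> g \<notin> max_subfield \<longrightarrow> p_ideal f = p_ideal g)"
proof -
  have dep: "p_ideal f = p_ideal g"
    if gK: "g \<notin> max_subfield" and fg: "alg_dep_over max_subfield f g"
  proof (rule p_ideal_eqI)
    fix P :: "'a fract set"
    assume "prime_ideal_R P"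
    then show "inverse (emb f) \<in> P \<longleftrightarrow> inverse (emb g) \<in> P"
      using inverse_emb_in_prime_ideal_R_if_alg_dep[OF assms gK fg]
        inverse_emb_in_prime_ideal_R_if_alg_dep[OF assms(1) gK assms(2) alg_dep_over_sym[OF fg]]
      by blast
  qed
  have "(0::'a) \<in> max_subfield"
    by (simp add: max_subfield_def)
  moreover have "(-1::'a) \<in> max_subfield"
    by (rule unit_in_max_subfield) simp
  ultimately show ?thesis
    using dep in_poly_ring_imp_alg_dep_over by blast
qed

end
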